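(* Let $G$ be a graph with a linear order $<$ on $V(G)$ satisfying the X-property, and let $s<t$ be vertices with $\operatorname{dist}(s,t)<\infty$. Then for every integer $k\ge 1$, the closed neighborhood $N[\alpha_s(k)]$ contains $\alpha_s(k-1)$ or $\beta_s(k-1)$.
   Context: The X-property: for all vertices $p<q<r<s$, if $\{p,r\}\in E(G)$ and $\{q,s\}\in E(G)$ then $\{p,s\}\in E(G)$. $N[v]$ is the closed neighborhood of $v$. For an integer $k\ge0$, $\alpha_s(k)$ (resp. $\beta_s(k)$) is the leftmost (resp. rightmost) vertex, w.r.t. $<$, that can be reached from $s$ by a path of length at most $k$ all of whose vertices $v$ satisfy $v\le t$. (In particular $\alpha_s(0)=\beta_s(0)=s$.) *)

theory Defs
  imports Main
begin

definition simple_graph :: "'a set \<Rightarrow> ('a \<Rightarrow> 'a \<Rightarrow> bool) \<Rightarrow> bool" where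
  "simple_graph V E \<longleftrightarrow> finite V \<and> (\<forall>u v. E u v \<longrightarrow> u \<in> V \<and> v \<in> V)
     \<and> (\<forall>u v. E u v \<longrightarrow> E v u) \<and> (\<forall>u. \<not> E u u)"

definition X_property :: "'a::linorder set \<Rightarrow> ('a \<Rightarrow> 'a \<Rightarrow> bool) \<Rightarrow> bool" where
  "X_property V E \<longleftrightarrow> (\<forall>p\<in>V. \<forall>q\<in>V. \<forall>r\<in>V. \<forall>s\<in>V.
      p < q \<and> q < r \<and> r < s \<and> E p r \<and> E q s \<longrightarrow> E p s)"

text \<open>A path: nonempty list of distinct vertices, consecutive ones adjacent.
  Its length is the number of edges, i.e. length minus one.\<close>
definition is_path :: "'a set \<Rightarrow> ('a \<Rightarrow> 'a \<Rightarrow> bool) \<Rightarrow> 'a list \<Rightarrow> bool" where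
  "is_path V E p \<longleftrightarrow> p \<noteq> [] \<and> set p \<subseteq> V \<and> distinct p
     \<and> (\<forall>i. Suc i < length p \<longrightarrow> E (p ! i) (p ! Suc i))"

definition closed_nbhd :: "'a set \<Rightarrow> ('a \<Rightarrow> 'a \<Rightarrow> bool) \<Rightarrow> 'a \<Rightarrow> 'a set" where
  "closed_nbhd V E v = {u \<in> V. E v u} \<union> {v}"

text \<open>dist(s,t) < infinity: some path joins s and t.\<close>
definition connected_pair :: "'a set \<Rightarrow> ('a \<Rightarrow> 'a \<Rightarrow> bool) \<Rightarrow> 'a \<Rightarrow> 'a \<Rightarrow> bool" where
  "connected_pair V E s t \<longleftrightarrow> (\<exists>p. is_path V E p \<and> hd p = s \<and> last p = t)"

definition reach_le :: "'a set \<Rightarrow> ('a \<Rightarrow> 'a \<Rightarrow> bool) \<Rightarrow> 'a::linorder \<Rightarrow> 'a \<Rightarrow> nat \<Rightarrow> 'a set" where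
  "reach_le V E t s k = {v. \<exists>p. is_path V E p \<and> hd p = s \<and> last p = v
      \<and> length p \<le> k + 1 \<and> (\<forall>x\<in>set p. x \<le> t)}"

definition alpha :: "'a set \<Rightarrow> ('a \<Rightarrow> 'a \<Rightarrow> bool) \<Rightarrow> 'a::linorder \<Rightarrow> 'a \<Rightarrow> nat \<Rightarrow> 'a" where
  "alpha V E t s k = Min (reach_le V E t s k)"

definition beta :: "'a set \<Rightarrow> ('a \<Rightarrow> 'a \<Rightarrow> bool) \<Rightarrow> 'a::linorder \<Rightarrow> 'a \<Rightarrow> nat \<Rightarrow> 'a" where
  "beta V E t s k = Max (reach_le V E t s k)"

end

theory Submission
  imports Defs
begin

text \<open>Let \<open>R j\<close> be the set of vertices reachable from \<open>s\<close> in at most \<open>j\<close> steps below \<open>t\<close>, and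
  \<open>a = \<alpha>\<^sub>s(k+1)\<close>. If \<open>a \<in> R k\<close> then \<open>a = \<alpha>\<^sub>s(k)\<close>. Otherwise \<open>a < \<alpha>\<^sub>s(k)\<close> and \<open>a\<close> has a
  neighbour in \<open>R k\<close>; let \<open>w\<close> be the largest one. Since \<open>a \<notin> R k\<close>, no path of at most \<open>k\<close>
  edges from \<open>s\<close> below \<open>t\<close> passes through \<open>w\<close> except as its last vertex. If
  \<open>\<alpha>\<^sub>s(k) < w < \<beta>\<^sub>s(k)\<close>, the path from \<open>s\<close> to \<open>\<beta>\<^sub>s(k)\<close> (if \<open>s \<le> w\<close>) or to \<open>\<alpha>\<^sub>s(k)\<close>
  (if \<open>w < s\<close>) therefore jumps over \<open>w\<close> along an edge \<open>x y\<close> with \<open>x < w < y\<close>. As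
  \<open>a < \<alpha>\<^sub>s(k) \<le> x\<close>, the X-property applied to \<open>a < x < w < y\<close> yields the edge \<open>a y\<close>,
  contradicting the maximality of \<open>w\<close>.\<close>

lemma is_path_take:
  assumes "is_path V E p" "0 < n"
  shows "is_path V E (take n p)"
  using assms unfolding is_path_def by (auto dest: in_set_takeD)

lemma is_path_snoc:
  assumes "is_path V E p" "v \<in> V" "v \<notin> set p" "E (last p) v"
  shows "is_path V E (p @ [v])"
  unfolding is_path_def
proof (intro conjI allI impI)
  show "p @ [v] \<noteq> []" "set (p @ [v]) \<subseteq> V" "distinct (p @ [v])"
    using assms unfolding is_path_def by auto
  fix i assume i: "Suc i < length (p @ [v])"
  show "E ((p @ [v]) ! i) ((p @ [v]) ! Suc i)"
  proof (cases "Suc i < length p")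
    case True
    then show ?thesis using assms(1) unfolding is_path_def by (simp add: nth_append)
  next
    case False
    then have "p \<noteq> []" "i = length p - 1" using i by auto
    then show ?thesis using assms(4) by (simp add: nth_append last_conv_nth)
  qed
qed

lemma X_propertyD:
  assumes "X_property V E" "p \<in> V" "q \<in> V" "r \<in> V" "u \<in> V"
    and "p < q" "q < r" "r < u" "E p r" "E q u"
  shows "E p u"
  using assms(1)[unfolded X_property_def, rule_format, of p q r u] assms(2-) by blast

lemma simple_graph_symp: "simple_graph V E \<Longrightarrow> symp E"
  unfolding simple_graph_def by (auto intro: sympI)

lemma reach_le_subset: "reach_le V E t s k \<subseteq> V"
  unfolding reach_le_def is_path_def by auto

lemma reach_le_le: "v \<in> reach_le V E t s k \<Longrightarrow> v \<le> t"
  unfolding reach_le_def is_path_def by auto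

lemma finite_reach_le: "finite V \<Longrightarrow> finite (reach_le V E t s k)"
  using reach_le_subset finite_subset by metis

lemma start_in_reach_le: "s \<in> V \<Longrightarrow> s \<le> t \<Longrightarrow> s \<in> reach_le V E t s k"
  unfolding reach_le_def is_path_def by (intro CollectI exI[of _ "[s]"]) auto

lemma reach_le_mono: "j \<le> k \<Longrightarrow> reach_le V E t s j \<subseteq> reach_le V E t s k"
  unfolding reach_le_def by fastforce

lemma nth_path_in_reach_le:
  assumes "is_path V E p" "hd p = s" "\<forall>x\<in>set p. x \<le> t" "i < length p"
  shows "p ! i \<in> reach_le V E t s i"
proof -
  have "is_path V E (take (Suc i) p)" using is_path_take assms(1) by blast
  moreover have "hd (take (Suc i) p) = s" using assms(2) by (simp add: hd_take)
  moreover have "last (take (Suc i) p) = p ! i" using assms(4) by (simp add: take_Suc_conv_app_nth)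
  moreover have "length (take (Suc i) p) \<le> i + 1" by simp
  moreover have "\<forall>x\<in>set (take (Suc i) p). x \<le> t" using assms(3) by (auto dest: in_set_takeD)
  ultimately show ?thesis unfolding reach_le_def by blast
qed

lemma path_in_reach_le:
  assumes "is_path V E p" "hd p = s" "\<forall>x\<in>set p. x \<le> t" "length p \<le> k + 1"
  shows "set p \<subseteq> reach_le V E t s k"
proof
  fix x assume "x \<in> set p"
  then obtain i where i: "i < length p" "p ! i = x" by (metis in_set_conv_nth)
  then have "i \<le> k" using assms(4) by simp
  then show "x \<in> reach_le V E t s k"
    using nth_path_in_reach_le[OF assms(1-3) i(1)] reach_le_mono i(2) by blast
qed

lemma reach_le_SucI:
  assumes "u \<in> reach_le V E t s k" "E u v" "v \<in> V" "v \<le> t"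
  shows "v \<in> reach_le V E t s (Suc k)"
proof -
  obtain p where p: "is_path V E p" "hd p = s" "last p = u" "length p \<le> k + 1"
      "\<forall>x\<in>set p. x \<le> t"
    using assms(1) unfolding reach_le_def by blast
  show ?thesis
  proof (cases "v \<in> set p")
    case True
    then have "v \<in> reach_le V E t s k" using path_in_reach_le[OF p(1,2,5,4)] by blast
    then show ?thesis using reach_le_mono[of k "Suc k" V E t s] by auto
  next
    case False
    have "is_path V E (p @ [v])" using is_path_snoc[OF p(1) assms(3) False] p(3) assms(2) by simp
    moreover have "hd (p @ [v]) = s" using p(1,2) unfolding is_path_def by simp
    moreover have "length (p @ [v]) \<le> Suc k + 1" using p(4) by simp
    moreover have "\<forall>x\<in>set (p @ [v]). x \<le> t" using p(5) assms(4) by simp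
    moreover have "last (p @ [v]) = v" by simp
    ultimately show ?thesis unfolding reach_le_def by blast
  qed
qed

lemma reach_le_SucE:
  assumes "v \<in> reach_le V E t s (Suc k)" "v \<notin> reach_le V E t s k"
  obtains u where "u \<in> reach_le V E t s k" "E u v"
proof -
  obtain p where p: "is_path V E p" "hd p = s" "last p = v" "length p \<le> Suc k + 1"
      "\<forall>x\<in>set p. x \<le> t"
    using assms(1) unfolding reach_le_def by blast
  have "\<not> length p \<le> k + 1" using assms(2) p unfolding reach_le_def by blast
  then have len: "length p = Suc (Suc k)" using p(4) by simp
  have "p ! k \<in> reach_le V E t s k" using nth_path_in_reach_le[OF p(1,2,5)] len by simp
  moreover have "E (p ! k) (p ! Suc k)" using p(1) len unfolding is_path_def by simp
  moreover have "p ! Suc k = v" using p(3) last_conv_nth[of p] len by force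
  ultimately show ?thesis using that by blast
qed

lemma neighbour_on_path_is_last:
  assumes "a \<notin> reach_le V E t s k" "a \<in> V" "a \<le> t" "E w a"
    and p: "is_path V E p" "hd p = s" "\<forall>x\<in>set p. x \<le> t" "length p \<le> k + 1"
    and "w \<in> set p"
  shows "w = last p"
proof (rule ccontr)
  assume "w \<noteq> last p"
  obtain i where i: "i < length p" "p ! i = w" using \<open>w \<in> set p\<close> by (metis in_set_conv_nth)
  with \<open>w \<noteq> last p\<close> have "Suc i < length p" by (metis Suc_lessI diff_Suc_1 last_conv_nth list.size(3) not_less0)
  have "w \<in> reach_le V E t s i" using nth_path_in_reach_le[OF p(1-3) i(1)] i(2) by simp
  then have "a \<in> reach_le V E t s (Suc i)" using reach_le_SucI assms(2-4) by blast
  moreover have "Suc i \<le> k" using \<open>Suc i < length p\<close> p(4) by simp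
  ultimately show False using reach_le_mono assms(1) by blast
qed

lemma exists_consecutive_change:
  "xs \<noteq> [] \<Longrightarrow> P (hd xs) \<Longrightarrow> \<not> P (last xs) \<Longrightarrow>
    \<exists>i. Suc i < length xs \<and> P (xs ! i) \<and> \<not> P (xs ! Suc i)"
proof (induction xs)
  case Nil
  then show ?case by simp
next
  case (Cons x xs)
  show ?case
  proof (cases "xs \<noteq> [] \<and> P (hd xs)")
    case True
    then obtain i where "Suc i < length xs" "P (xs ! i)" "\<not> P (xs ! Suc i)"
      using Cons by auto
    then show ?thesis by (intro exI[of _ "Suc i"]) auto
  next
    case False
    then show ?thesis using Cons.prems by (intro exI[of _ 0]) (cases xs, auto)
  qed
qed

lemma path_edge_across:
  fixes w :: "'a::linorder"
  assumes "is_path V E p" "symp E" "w \<notin> set p"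
    and "hd p < w \<and> w < last p \<or> last p < w \<and> w < hd p"
  obtains x y where "x \<in> set p" "y \<in> set p" "E x y" "x < w" "w < y"
proof -
  have p: "p \<noteq> []" "\<And>i. Suc i < length p \<Longrightarrow> E (p ! i) (p ! Suc i)"
    using assms(1) unfolding is_path_def by auto
  have w: "\<And>i. i < length p \<Longrightarrow> p ! i \<noteq> w" using assms(3) nth_mem by metis
  from assms(4) show ?thesis
  proof
    assume "hd p < w \<and> w < last p"
    then have "\<exists>i. Suc i < length p \<and> p ! i < w \<and> \<not> p ! Suc i < w"
      using exists_consecutive_change[of p "\<lambda>x. x < w"] p(1) by auto
    then obtain i where "Suc i < length p" "p ! i < w" "\<not> p ! Suc i < w" by blast
    moreover have "w < p ! Suc i" using calculation w[of "Suc i"] by auto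
    ultimately show ?thesis using that[of "p ! i" "p ! Suc i"] p(2) by (simp add: nth_mem)
  next
    assume "last p < w \<and> w < hd p"
    then have "\<exists>i. Suc i < length p \<and> w < p ! i \<and> \<not> w < p ! Suc i"
      using exists_consecutive_change[of p "\<lambda>x. w < x"] p(1) by auto
    then obtain i where "Suc i < length p" "w < p ! i" "\<not> w < p ! Suc i" by blast
    moreover have "p ! Suc i < w" using calculation w[of "Suc i"] by auto
    ultimately show ?thesis using that[of "p ! Suc i" "p ! i"] p(2) assms(2)
      by (simp add: nth_mem sympD)
  qed
qed

lemma
  assumes "finite V" "s \<in> V" "s \<le> t"
  shows alpha_in_reach_le: "alpha V E t s k \<in> reach_le V E t s k"
    and alpha_le: "v \<in> reach_le V E t s k \<Longrightarrow> alpha V E t s k \<le> v"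
    and beta_in_reach_le: "beta V E t s k \<in> reach_le V E t s k"
    and le_beta: "v \<in> reach_le V E t s k \<Longrightarrow> v \<le> beta V E t s k"
proof -
  have "finite (reach_le V E t s k)" "reach_le V E t s k \<noteq> {}"
    using finite_reach_le[OF assms(1)] start_in_reach_le[OF assms(2,3), of E k] by auto
  then show "alpha V E t s k \<in> reach_le V E t s k" "beta V E t s k \<in> reach_le V E t s k"
    "v \<in> reach_le V E t s k \<Longrightarrow> alpha V E t s k \<le> v"
    "v \<in> reach_le V E t s k \<Longrightarrow> v \<le> beta V E t s k"
    unfolding alpha_def beta_def by auto
qed

lemma max_neighbour_in_reach_le_extreme:
  assumes G: "simple_graph V E" "X_property V E" "s \<in> V" "s \<le> t"
    and a: "a \<in> V" "a \<le> t" "a \<notin> reach_le V E t s k" "a < alpha V E t s k"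
    and w: "w \<in> reach_le V E t s k" "E a w"
    and w_max: "\<And>v. v \<in> reach_le V E t s k \<Longrightarrow> E a v \<Longrightarrow> v \<le> w"
  shows "w = alpha V E t s k \<or> w = beta V E t s k"
proof (rule ccontr)
  let ?R = "reach_le V E t s k"
  have fin: "finite V" and sym: "symp E" using G(1) simple_graph_symp simple_graph_def by auto
  assume "\<not> ?thesis"
  then have w_inner: "alpha V E t s k < w" "w < beta V E t s k"
    using alpha_le[OF fin G(3,4) w(1)] le_beta[OF fin G(3,4) w(1)] by auto
  obtain v where v: "v \<in> ?R" "v \<noteq> w" "s \<le> w \<and> w < v \<or> v < w \<and> w < s"
  proof (cases "s \<le> w")
    case True
    then show ?thesis using that[of "beta V E t s k"] w_inner beta_in_reach_le[OF fin G(3,4)] by simp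
  next
    case False
    then show ?thesis using that[of "alpha V E t s k"] w_inner alpha_in_reach_le[OF fin G(3,4)] by simp
  qed
  then obtain p where p: "is_path V E p" "hd p = s" "last p = v" "length p \<le> k + 1"
      "\<forall>x\<in>set p. x \<le> t"
    unfolding reach_le_def by blast
  have "w \<notin> set p"
    using neighbour_on_path_is_last[OF a(3,1,2) sympD[OF sym w(2)] p(1,2,5,4)] p(3) v(2) by blast
  moreover have "s \<in> set p" using p(1,2) hd_in_set unfolding is_path_def by metis
  ultimately have "hd p < w \<and> w < last p \<or> last p < w \<and> w < hd p"
    using v(3) p(2,3) by (auto simp: order_le_less)
  then obtain x y where xy: "x \<in> set p" "y \<in> set p" "E x y" "x < w" "w < y"
    using path_edge_across[OF p(1) sym \<open>w \<notin> set p\<close>] by blast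
  have "x \<in> ?R" "y \<in> ?R" using xy(1,2) path_in_reach_le[OF p(1,2,5,4)] by auto
  then have "a < x" using a(4) alpha_le[OF fin G(3,4)] by (meson order_less_le_trans)
  moreover have "x \<in> V" "y \<in> V" "w \<in> V"
    using reach_le_subset[of V E t s k] \<open>x \<in> ?R\<close> \<open>y \<in> ?R\<close> w(1) by auto
  ultimately have "E a y" using X_propertyD[OF G(2) a(1)] xy(3-5) w(2) by blast
  then show False using w_max[OF \<open>y \<in> ?R\<close>] xy(5) by simp
qed

lemma alpha_Suc_closed_nbhd:
  assumes G: "simple_graph V E" "X_property V E" "s \<in> V" "s \<le> t"
  shows "alpha V E t s k \<in> closed_nbhd V E (alpha V E t s (Suc k))
       \<or> beta V E t s k \<in> closed_nbhd V E (alpha V E t s (Suc k))"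
proof -
  let ?R = "reach_le V E t s" and ?a = "alpha V E t s (Suc k)"
  have fin: "finite V" using G(1) simple_graph_def by auto
  have a: "?a \<in> ?R (Suc k)" using alpha_in_reach_le[OF fin G(3,4)] .
  have "alpha V E t s k \<in> ?R (Suc k)"
    using alpha_in_reach_le[OF fin G(3,4), of E k] reach_le_mono[of k "Suc k" V E t s] by auto
  then have a_le: "?a \<le> alpha V E t s k" using alpha_le[OF fin G(3,4)] by blast
  show ?thesis
  proof (cases "?a \<in> ?R k")
    case True
    then have "alpha V E t s k = ?a" using a_le alpha_le[OF fin G(3,4)] by (simp add: eq_iff)
    then show ?thesis unfolding closed_nbhd_def by simp
  next
    case False
    have aV: "?a \<in> V" "?a \<le> t" using a reach_le_subset[of V E t s "Suc k"] reach_le_le[OF a] by auto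
    define W where "W = {v \<in> ?R k. E ?a v}"
    obtain u where "u \<in> ?R k" "E u ?a" using reach_le_SucE[OF a False] .
    then have "W \<noteq> {}" "finite W"
      using G(1) finite_reach_le[OF fin] unfolding W_def simple_graph_def by auto
    then have "Max W \<in> W" "\<And>v. v \<in> W \<Longrightarrow> v \<le> Max W" by auto
    moreover have "?a < alpha V E t s k"
      using a_le False alpha_in_reach_le[OF fin G(3,4)] by (metis order_le_less)
    ultimately have "Max W = alpha V E t s k \<or> Max W = beta V E t s k"
      using max_neighbour_in_reach_le_extreme[OF G aV False] unfolding W_def by blast
    moreover have "Max W \<in> V" "E ?a (Max W)"
      using \<open>Max W \<in> W\<close> reach_le_subset[of V E t s k] unfolding W_def by auto
    ultimately show ?thesis unfolding closed_nbhd_def by (elim disjE) auto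
  qed
qed

theorem lemma10:
  fixes V :: "'a::linorder set" and E :: "'a \<Rightarrow> 'a \<Rightarrow> bool" and s t :: 'a and k :: nat
  assumes "simple_graph V E"
    and "X_property V E"
    and "s \<in> V" and "t \<in> V" and "s < t"
    and "connected_pair V E s t"
    and "k \<ge> 1"
  shows "alpha V E t s (k - 1) \<in> closed_nbhd V E (alpha V E t s k)
       \<or> beta V E t s (k - 1) \<in> closed_nbhd V E (alpha V E t s k)"
  using alpha_Suc_closed_nbhd[OF assms(1-3), of t "k - 1"] assms(5,7) by simp

end
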